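(* Fix an integer $l\ge -1$. For every $g\ge 4l+3$, \[\#\{S\in\mathcal{S}_g\mid e(S)=g-l\}=\sum_{k=-1}^{l}\ \sum_{\substack{\overline{x}\in\mathcal{Y}(k)\\ a(\overline{x})+b(\overline{x})-c(\overline{x})=2k+1-l}}\binom{g-3k-2}{k+1-a(\overline{x})-2b(\overline{x})}.\]
   Context: A numerical semigroup $S$ is a submonoid of $\mathbb{N}_0$ with finite complement; its genus is the size of the complement and $e(S)$ is the size of its minimal generating set $(S\setminus\{0\})\setminus((S\setminus\{0\})+(S\setminus\{0\}))$. $\mathcal{S}_g$ is the set of numerical semigroups of genus $g$. For $\overline{x}=(x_1,\ldots,x_t)\in\{1,2,3\}^t$ let $a(\overline{x})=\#\{i: x_i=2\}$, $b(\overline{x})=\#\{i: x_i=3\}$, and $c(\overline{x})=\#\{i\in[1,t]: \exists j_1,j_2\in[1,t],\ j_1+j_2=i,\ (x_{j_1},x_{j_2},x_i)=(1,1,2)\}$. For an integer $k\ge 0$, $\mathcal{Y}(k)$ is the set of tuples $\overline{x}\in\{1,2,3\}^{2k+1}$ such that (i) whenever $i_1,i_2,i_3\in[1,2k+1]$ satisfy $i_1+i_2=i_3$, $(x_{i_1},x_{i_2},x_{i_3})\ne(1,1,3)$, and (ii) $a(\overline{x})+2b(\overline{x})\le k+1$; $\mathcal{Y}(-1)=\{\emptyset\}$ consists of the empty tuple (with $a=b=c=0$). *)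

theory Defs
  imports Main
begin

definition numerical_semigroup :: "nat set \<Rightarrow> bool" where
  "numerical_semigroup S \<longleftrightarrow> 0 \<in> S \<and> (\<forall>x\<in>S. \<forall>y\<in>S. x + y \<in> S) \<and> finite (UNIV - S)"

definition genus :: "nat set \<Rightarrow> nat" where
  "genus S = card (UNIV - S)"

definition minimal_generators :: "nat set \<Rightarrow> nat set" where
  "minimal_generators S = (S - {0}) - {x + y | x y. x \<in> S - {0} \<and> y \<in> S - {0}}"

definition embedding_dim :: "nat set \<Rightarrow> nat" where
  "embedding_dim S = card (minimal_generators S)"

definition semigroups_of_genus :: "nat \<Rightarrow> nat set set" where
  "semigroups_of_genus g = {S. numerical_semigroup S \<and> genus S = g}"

text \<open>Tuples (x_1,...,x_t) are lists xs with x_i = xs ! (i - 1).\<close>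

definition cnt_a :: "nat list \<Rightarrow> nat" where
  "cnt_a xs = card {i \<in> {1..length xs}. xs ! (i - 1) = 2}"

definition cnt_b :: "nat list \<Rightarrow> nat" where
  "cnt_b xs = card {i \<in> {1..length xs}. xs ! (i - 1) = 3}"

definition cnt_c :: "nat list \<Rightarrow> nat" where
  "cnt_c xs = card {i \<in> {1..length xs}. \<exists>j1\<in>{1..length xs}. \<exists>j2\<in>{1..length xs}.
      j1 + j2 = i \<and> xs ! (j1 - 1) = 1 \<and> xs ! (j2 - 1) = 1 \<and> xs ! (i - 1) = 2}"

definition Y :: "int \<Rightarrow> nat list set" where
  "Y k = (if k = -1 then {[]} else
     {xs. k \<ge> 0 \<and> length xs = nat (2 * k + 1) \<and> set xs \<subseteq> {1, 2, 3} \<and>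
          (\<forall>i1\<in>{1..length xs}. \<forall>i2\<in>{1..length xs}. \<forall>i3\<in>{1..length xs}.
              i1 + i2 = i3 \<longrightarrow> (xs ! (i1 - 1), xs ! (i2 - 1), xs ! (i3 - 1)) \<noteq> (1, 1, 3)) \<and>
          int (cnt_a xs) + 2 * int (cnt_b xs) \<le> k + 1})"

end

theory Submission
  imports Defs
begin

(* A numerical semigroup of multiplicity m is determined by its Kunz coordinates f: for 0 < r < m
   the least element congruent to r modulo m is the Apery element f r * m + r, and the possible f
   are exactly those satisfying the Kunz inequalities f (r + s) <= f r + f s (plus 1 when r + s
   wraps around m). The genus is m - 1 + h with h the sum of all f r - 1, and the minimal
   generators are m and the Apery elements that are not sums of two others, so e(S) is m minus the
   number of decomposable residues.

   If e(S) = g - l and g >= 4l + 3, then 3h <= m. When r is not the sum of two residues with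
   coordinate 1, at least half of the residues j < r (or of the r < j < m) have a coordinate >= 2,
   which the bound on h cannot afford unless f r is small. This forces f <= 3, f r = 3 only for
   r <= 2h - 3 and then r decomposable, and f r = 2 decomposable whenever r >= 2h. Hence S is
   encoded by k = h - 1, the tuple (f 1, ..., f (2k + 1)) in Y(k) and the set R of the
   r in [2k + 2, g - k) with f r = 2, of size k + 1 - a - 2b; the condition e(S) = g - l becomes
   a + b - c = 2k + 1 - l, and the choices of R are counted by the binomial coefficient. *)

lemma obtain_div_mod:
  fixes n m :: nat
  assumes "0 < m"
  obtains q r where "n = q * m + r" "r < m"
  using assms div_mult_mod_eq[of n m] by (metis mod_less_divisor)

lemma mult_add_less_inject:
  fixes q r q' r' m :: nat
  assumes "r < m" "r' < m" "q * m + r = q' * m + r'"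
  shows "q = q' \<and> r = r'"
proof -
  have "(q * m + r) div m = (q' * m + r') div m" "(q * m + r) mod m = (q' * m + r') mod m"
    using assms(3) by simp_all
  then show ?thesis using assms(1,2) by simp
qed

lemma mult_add_eq_add_iff:
  fixes m :: nat
  assumes "a < m" "b < m" "r < m"
  shows "q * m + r = (qa * m + a) + (qb * m + b) \<longleftrightarrow>
    (a + b = r \<and> q = qa + qb) \<or> (a + b = r + m \<and> q = qa + qb + 1)"
proof (cases "a + b < m")
  case True
  have "(qa * m + a) + (qb * m + b) = (qa + qb) * m + (a + b)" by (simp add: algebra_simps)
  then show ?thesis using mult_add_less_inject[OF assms(3) True, of q "qa + qb"] True by auto
next
  case False
  have "(qa * m + a) + (qb * m + b) = (qa + qb + 1) * m + (a + b - m)"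
    using False by (simp add: algebra_simps)
  moreover have "a + b - m < m" using assms by linarith
  ultimately show ?thesis
    using mult_add_less_inject[OF assms(3) \<open>a + b - m < m\<close>, of q "qa + qb + 1"] False by auto
qed

lemma card_le_twice_card_if_involution_meets:
  assumes "finite A" and inv: "\<And>j. j \<in> A \<Longrightarrow> \<sigma> j \<in> A \<and> \<sigma> (\<sigma> j) = j"
    and meets: "\<And>j. j \<in> A \<Longrightarrow> j \<in> X \<or> \<sigma> j \<in> X"
  shows "card A \<le> 2 * card (X \<inter> A)"
proof -
  have "A \<subseteq> (X \<inter> A) \<union> \<sigma> ` (X \<inter> A)"
  proof
    fix j assume j: "j \<in> A"
    show "j \<in> (X \<inter> A) \<union> \<sigma> ` (X \<inter> A)"
      using meets[OF j] inv[OF j] j by (metis IntI UnI1 UnI2 image_eqI)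
  qed
  then have "card A \<le> card ((X \<inter> A) \<union> \<sigma> ` (X \<inter> A))"
    by (rule card_mono[rotated]) (use assms(1) in simp)
  also have "\<dots> \<le> card (X \<inter> A) + card (\<sigma> ` (X \<inter> A))" by (rule card_Un_le)
  also have "\<dots> \<le> 2 * card (X \<inter> A)" using card_image_le[of "X \<inter> A" \<sigma>] assms(1) by simp
  finally show ?thesis .
qed

lemma sum_minus_1_eq_card_2_3:
  assumes "finite A" "\<And>i. i \<in> A \<Longrightarrow> f i \<in> {1, 2, 3 :: nat}"
  shows "(\<Sum>i\<in>A. f i - 1) = card {i \<in> A. f i = 2} + 2 * card {i \<in> A. f i = 3}"
proof -
  have "(\<Sum>i\<in>A. f i - 1) = (\<Sum>i\<in>A. (if f i = 2 then 1 else 0) + (if f i = 3 then 2 else 0))"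
  proof (rule sum.cong)
    fix i assume "i \<in> A"
    then have "f i \<in> {1, 2, 3}" by (rule assms(2))
    then show "f i - 1 = (if f i = 2 then 1 else 0) + (if f i = 3 then 2 else 0)" by auto
  qed simp
  also have "\<dots> = card {i \<in> A. f i = 2} + 2 * card {i \<in> A. f i = 3}"
    using assms(1) by (simp add: sum.distrib sum.If_cases Int_def conj_commute)
  finally show ?thesis .
qed

section \<open>Kunz coordinates\<close>

definition kunz_semigroup :: "nat \<Rightarrow> (nat \<Rightarrow> nat) \<Rightarrow> nat set" where
  "kunz_semigroup m f = {n. n mod m = 0 \<or> f (n mod m) \<le> n div m}"

definition kunz_admissible :: "nat \<Rightarrow> (nat \<Rightarrow> nat) \<Rightarrow> bool" where
  "kunz_admissible m f \<longleftrightarrow> 0 < m \<and> (\<forall>r\<in>{1..<m}. 1 \<le> f r) \<and>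
     (\<forall>r s. 1 \<le> r \<longrightarrow> 1 \<le> s \<longrightarrow> r + s < m \<longrightarrow> f (r + s) \<le> f r + f s) \<and>
     (\<forall>r s. r < m \<longrightarrow> s < m \<longrightarrow> m < r + s \<longrightarrow> f (r + s - m) \<le> f r + f s + 1)"

lemma kunz_admissibleD:
  assumes "kunz_admissible m f"
  shows kunz_admissible_pos: "0 < m"
    and kunz_admissible_ge_1: "r \<in> {1..<m} \<Longrightarrow> 1 \<le> f r"
    and kunz_admissible_add: "1 \<le> r \<Longrightarrow> 1 \<le> s \<Longrightarrow> r + s < m \<Longrightarrow> f (r + s) \<le> f r + f s"
    and kunz_admissible_add_wrap:
      "r < m \<Longrightarrow> s < m \<Longrightarrow> m < r + s \<Longrightarrow> f (r + s - m) \<le> f r + f s + 1"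
  using assms unfolding kunz_admissible_def by blast+

lemma kunz_semigroup_mem:
  assumes "r < m"
  shows "q * m + r \<in> kunz_semigroup m f \<longleftrightarrow> r = 0 \<or> f r \<le> q"
  using assms unfolding kunz_semigroup_def by auto

lemma kunz_semigroup_mult: "q * m \<in> kunz_semigroup m f"
  unfolding kunz_semigroup_def by simp

lemma kunz_semigroup_apery_mem: "r < m \<Longrightarrow> f r * m + r \<in> kunz_semigroup m f"
  by (simp add: kunz_semigroup_mem)

lemma kunz_semigroup_notin_below:
  assumes "kunz_admissible m f" "0 < n" "n < m"
  shows "n \<notin> kunz_semigroup m f"
  using kunz_semigroup_mem[of n m 0 f] kunz_admissible_ge_1[OF assms(1), of n] assms(2,3) by simp

lemma kunz_semigroup_add:
  assumes kunz: "kunz_admissible m f"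
    and x: "x \<in> kunz_semigroup m f" and y: "y \<in> kunz_semigroup m f"
  shows "x + y \<in> kunz_semigroup m f"
proof -
  have m: "0 < m" using kunz by (rule kunz_admissible_pos)
  obtain q r where xqr: "x = q * m + r" "r < m" using obtain_div_mod[OF m] .
  obtain q' r' where yqr: "y = q' * m + r'" "r' < m" using obtain_div_mod[OF m] .
  have fx: "r = 0 \<or> f r \<le> q" and fy: "r' = 0 \<or> f r' \<le> q'"
    using x y xqr yqr kunz_semigroup_mem by blast+
  consider "r + r' < m" | "r + r' = m" | "m < r + r'" by linarith
  then show ?thesis
  proof cases
    case 1
    have "r + r' = 0 \<or> f (r + r') \<le> q + q'"
    proof (cases "r = 0 \<or> r' = 0")
      case True
      then show ?thesis using fx fy by auto
    next
      case False
      then show ?thesis using fx fy kunz_admissible_add[OF kunz, of r r'] 1 by auto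
    qed
    moreover have "x + y = (q + q') * m + (r + r')" using xqr yqr by (simp add: algebra_simps)
    ultimately show ?thesis using kunz_semigroup_mem[OF 1] by (simp only:)
  next
    case 2
    then have "x + y = (q + q' + 1) * m" using xqr yqr by (simp add: algebra_simps)
    then show ?thesis using kunz_semigroup_mult by metis
  next
    case 3
    have lt: "r + r' - m < m" using xqr yqr by linarith
    have "x + y = (q + q' + 1) * m + (r + r' - m)"
      using xqr yqr 3 by (simp add: algebra_simps)
    moreover have "f (r + r' - m) \<le> q + q' + 1"
      using fx fy kunz_admissible_add_wrap[OF kunz, of r r'] 3 xqr yqr by auto
    ultimately show ?thesis using kunz_semigroup_mem[OF lt] by (simp only:) simp
  qed
qed

lemma kunz_semigroup_gaps_bij:
  assumes "0 < m"
  shows "bij_betw (\<lambda>(r, q). q * m + r) (SIGMA r:{1..<m}. {..<f r}) (UNIV - kunz_semigroup m f)"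
proof (rule bij_betw_imageI)
  show "inj_on (\<lambda>(r, q). q * m + r) (SIGMA r:{1..<m}. {..<f r})"
    by (rule inj_onI) (clarsimp, metis mult_add_less_inject)
  show "(\<lambda>(r, q). q * m + r) ` (SIGMA r:{1..<m}. {..<f r}) = UNIV - kunz_semigroup m f"
  proof (rule set_eqI)
    fix n
    obtain q r where n: "n = q * m + r" "r < m" using obtain_div_mod[OF assms] .
    have "n \<in> (\<lambda>(r, q). q * m + r) ` (SIGMA r:{1..<m}. {..<f r}) \<longleftrightarrow> r \<noteq> 0 \<and> q < f r"
    proof
      assume "n \<in> (\<lambda>(r, q). q * m + r) ` (SIGMA r:{1..<m}. {..<f r})"
      then obtain r' q' where r': "r' \<in> {1..<m}" "q' < f r'" "n = q' * m + r'" by auto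
      then have "q' = q \<and> r' = r" using n mult_add_less_inject[of r' m r q' q] by simp
      then show "r \<noteq> 0 \<and> q < f r" using r' by auto
    next
      assume "r \<noteq> 0 \<and> q < f r"
      then have "(r, q) \<in> (SIGMA r:{1..<m}. {..<f r})" using n by auto
      then show "n \<in> (\<lambda>(r, q). q * m + r) ` (SIGMA r:{1..<m}. {..<f r})"
        using n by force
    qed
    then show "n \<in> (\<lambda>(r, q). q * m + r) ` (SIGMA r:{1..<m}. {..<f r}) \<longleftrightarrow>
        n \<in> UNIV - kunz_semigroup m f"
      using n kunz_semigroup_mem by auto
  qed
qed

lemma numerical_semigroup_kunz_semigroup:
  assumes "kunz_admissible m f"
  shows "numerical_semigroup (kunz_semigroup m f)"
  unfolding numerical_semigroup_def
  using kunz_semigroup_add[OF assms] kunz_semigroup_mult[of 0 m f]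
    bij_betw_finite[OF kunz_semigroup_gaps_bij[OF kunz_admissible_pos[OF assms]]]
  by auto

lemma genus_kunz_semigroup:
  assumes "0 < m"
  shows "genus (kunz_semigroup m f) = (\<Sum>r\<in>{1..<m}. f r)"
  unfolding genus_def
  using bij_betw_same_card[OF kunz_semigroup_gaps_bij[OF assms]] by (simp add: card_SigmaI)

lemma kunz_semigroup_cong:
  assumes "0 < m" "\<And>r. r \<in> {1..<m} \<Longrightarrow> f r = f' r"
  shows "kunz_semigroup m f = kunz_semigroup m f'"
  unfolding kunz_semigroup_def using assms by (metis atLeastLessThan_iff less_one
      mod_less_divisor not_less)

lemma kunz_semigroup_inject:
  assumes kunz: "kunz_admissible m f" and kunz': "kunz_admissible m' f'"
    and eq: "kunz_semigroup m f = kunz_semigroup m' f'"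
  shows "m = m'" and "r \<in> {1..<m} \<Longrightarrow> f r = f' r"
proof -
  have "m \<in> kunz_semigroup m' f'" "m' \<in> kunz_semigroup m f"
    using eq kunz_semigroup_mult[of 1] by auto
  then show mm: "m = m'"
    using kunz_semigroup_notin_below[OF kunz] kunz_semigroup_notin_below[OF kunz']
      kunz_admissible_pos[OF kunz] kunz_admissible_pos[OF kunz'] by (metis linorder_neqE_nat)
  assume r: "r \<in> {1..<m}"
  then have "f r * m + r \<in> kunz_semigroup m f'" "f' r * m + r \<in> kunz_semigroup m f"
    using eq mm kunz_semigroup_apery_mem[of r m] by auto
  then show "f r = f' r" using r kunz_semigroup_mem[of r m] by (simp add: le_antisym)
qed

lemma kunz_representation_if_mem_iff:
  assumes S0: "0 \<in> S" and add: "\<And>x y. x \<in> S \<Longrightarrow> y \<in> S \<Longrightarrow> x + y \<in> S"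
    and m: "0 < m" and below: "\<And>n. 0 < n \<Longrightarrow> n < m \<Longrightarrow> n \<notin> S"
    and mem: "\<And>q r. q * m + r \<in> S \<longleftrightarrow> f r \<le> q"
  shows "kunz_admissible m f" and "S = kunz_semigroup m f"
proof -
  have "f 0 = 0" using mem[of 0 0] S0 by simp
  show "S = kunz_semigroup m f"
  proof (rule set_eqI)
    fix n
    obtain q r where n: "n = q * m + r" "r < m" using obtain_div_mod[OF m] .
    show "n \<in> S \<longleftrightarrow> n \<in> kunz_semigroup m f"
      using n mem kunz_semigroup_mem \<open>f 0 = 0\<close> by auto
  qed
  show "kunz_admissible m f"
    unfolding kunz_admissible_def
  proof (intro conjI ballI allI impI)
    fix r assume "r \<in> {1..<m}"
    then show "1 \<le> f r" using mem[of 0 r] below by (auto simp: not_less_eq_eq)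
  next
    fix r s assume "1 \<le> r" "1 \<le> s" "r + s < m"
    have "(f r * m + r) + (f s * m + s) \<in> S" using mem add by blast
    also have "(f r * m + r) + (f s * m + s) = (f r + f s) * m + (r + s)"
      by (simp add: algebra_simps)
    finally show "f (r + s) \<le> f r + f s" using mem by blast
  next
    fix r s assume "r < m" "s < m" "m < r + s"
    have "(f r * m + r) + (f s * m + s) \<in> S" using mem add by blast
    also have "(f r * m + r) + (f s * m + s) = (f r + f s + 1) * m + (r + s - m)"
      using \<open>m < r + s\<close> by (simp add: algebra_simps)
    finally show "f (r + s - m) \<le> f r + f s + 1" using mem by blast
  qed (use m in simp)
qed

lemma numerical_semigroup_kunz_representation:
  assumes "numerical_semigroup S"
  obtains m f where "kunz_admissible m f" "S = kunz_semigroup m f"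
proof -
  have S0: "0 \<in> S" and add: "\<And>x y. x \<in> S \<Longrightarrow> y \<in> S \<Longrightarrow> x + y \<in> S"
    and fin: "finite (UNIV - S)"
    using assms unfolding numerical_semigroup_def by auto
  obtain b where big: "\<And>n. b \<le> n \<Longrightarrow> n \<in> S"
    using fin finite_nat_set_iff_bounded by (meson DiffI UNIV_I not_less)
  define m where "m = (LEAST n. n \<in> S \<and> 0 < n)"
  have "m \<in> S \<and> 0 < m"
    unfolding m_def by (rule LeastI[of _ "Suc b"]) (simp add: big)
  then have mS: "m \<in> S" and m: "0 < m" by auto
  have below: "0 < n \<Longrightarrow> n < m \<Longrightarrow> n \<notin> S" for n
    unfolding m_def using not_less_Least by blast
  have add_mult: "x \<in> S \<Longrightarrow> x + q * m \<in> S" for x q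
  proof (induction q)
    case (Suc q)
    then have "(x + q * m) + m \<in> S" using add mS by blast
    then show ?case by (simp add: algebra_simps)
  qed simp
  define f where "f r = (LEAST q. q * m + r \<in> S)" for r
  have mem: "q * m + r \<in> S \<longleftrightarrow> f r \<le> q" for q r
  proof
    assume "q * m + r \<in> S"
    then show "f r \<le> q" unfolding f_def by (rule Least_le)
  next
    assume "f r \<le> q"
    have "b * m + r \<in> S" using big m by (simp add: add_increasing2)
    then have "f r * m + r \<in> S" unfolding f_def by (rule LeastI)
    then have "f r * m + r + (q - f r) * m \<in> S" by (rule add_mult)
    also have "f r * m + r + (q - f r) * m = q * m + r"
      using \<open>f r \<le> q\<close> by (simp add: algebra_simps flip: add_mult_distrib)
    finally show "q * m + r \<in> S" .
  qed
  show thesis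
    using that kunz_representation_if_mem_iff[OF S0 add m below mem] by blast
qed

section \<open>Apery elements and minimal generators\<close>

definition kunz_decomposable :: "nat \<Rightarrow> (nat \<Rightarrow> nat) \<Rightarrow> nat \<Rightarrow> bool" where
  "kunz_decomposable m f r \<longleftrightarrow>
     (\<exists>a\<in>{1..<m}. \<exists>b\<in>{1..<m}. f r * m + r = (f a * m + a) + (f b * m + b))"

lemma kunz_decomposable_iff:
  assumes "r < m"
  shows "kunz_decomposable m f r \<longleftrightarrow> (\<exists>a\<in>{1..<m}. \<exists>b\<in>{1..<m}.
    (a + b = r \<and> f r = f a + f b) \<or> (a + b = r + m \<and> f r = f a + f b + 1))"
  unfolding kunz_decomposable_def using assms by (auto simp: mult_add_eq_add_iff)

lemma mem_minimal_generators_iff: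
  "n \<in> minimal_generators S \<longleftrightarrow> n \<in> S - {0} \<and> (\<forall>x\<in>S - {0}. \<forall>y\<in>S - {0}. n \<noteq> x + y)"
  unfolding minimal_generators_def by blast

lemma kunz_semigroup_apery_cases:
  assumes "0 < m" "n \<in> kunz_semigroup m f"
  obtains "n = 0"
  | "m \<le> n" "n - m \<in> kunz_semigroup m f"
  | r where "r \<in> {1..<m}" "n = f r * m + r"
proof -
  obtain q r where n: "n = q * m + r" "r < m" using obtain_div_mod[OF assms(1)] .
  then have fr: "r = 0 \<or> f r \<le> q" using assms(2) kunz_semigroup_mem by blast
  show thesis
  proof (cases q)
    case 0
    then show thesis using that(1) that(3)[of r] n fr by (cases "r = 0") auto
  next
    case (Suc q')
    show thesis
    proof (cases "r \<noteq> 0 \<and> q = f r")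
      case True
      then show thesis using that(3)[of r] n by auto
    next
      case False
      then have "n - m = q' * m + r" "m \<le> n" "r = 0 \<or> f r \<le> q'" using n fr Suc by auto
      then show thesis using that(2) kunz_semigroup_mem[OF n(2)] by auto
    qed
  qed
qed

lemma kunz_semigroup_apery_minimal:
  assumes "r \<in> {1..<m}" "x \<in> kunz_semigroup m f"
  shows "x + m \<noteq> f r * m + r"
proof
  assume eq: "x + m = f r * m + r"
  obtain q r' where x: "x = q * m + r'" "r' < m" using obtain_div_mod[of m x] assms(1) by auto
  have "r < m" using assms(1) by simp
  have "Suc q * m + r' = f r * m + r" using eq x by simp
  from mult_add_less_inject[OF x(2) \<open>r < m\<close> this] have "Suc q = f r" "r' = r" by simp_all
  then show False using assms kunz_semigroup_mem[OF x(2)] unfolding x by auto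
qed

lemma kunz_semigroup_apery_summand:
  assumes kunz: "kunz_admissible m f" and r: "r \<in> {1..<m}" and sum: "f r * m + r = x + y"
    and x: "x \<in> kunz_semigroup m f - {0}" and y: "y \<in> kunz_semigroup m f"
  shows "\<exists>a\<in>{1..<m}. x = f a * m + a"
proof -
  have x_mem: "x \<in> kunz_semigroup m f" using x by blast
  show ?thesis
  proof (cases rule: kunz_semigroup_apery_cases[OF kunz_admissible_pos[OF kunz] x_mem])
    case 2
    have "(x - m + y) + m = f r * m + r" using sum 2 by simp
    moreover have "x - m + y \<in> kunz_semigroup m f" using kunz_semigroup_add[OF kunz] 2 y by blast
    ultimately show ?thesis using kunz_semigroup_apery_minimal[OF r] by blast
  qed (use x in auto)
qed

lemma multiplicity_mem_minimal_generators:
  assumes kunz: "kunz_admissible m f"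
  shows "m \<in> minimal_generators (kunz_semigroup m f)"
proof -
  have "m \<noteq> x + y" if "x \<in> kunz_semigroup m f - {0}" "y \<in> kunz_semigroup m f - {0}" for x y
  proof
    assume "m = x + y"
    then have "0 < x" "x < m" using that by auto
    then show False using kunz_semigroup_notin_below[OF kunz] that by blast
  qed
  then show ?thesis
    unfolding mem_minimal_generators_iff
    using kunz_semigroup_mult[of 1 m f] kunz_admissible_pos[OF kunz] by auto
qed

lemma apery_mem_minimal_generators_iff:
  assumes kunz: "kunz_admissible m f" and r: "r \<in> {1..<m}"
  shows "f r * m + r \<in> minimal_generators (kunz_semigroup m f) \<longleftrightarrow> \<not> kunz_decomposable m f r"
    (is "?w r \<in> minimal_generators ?S \<longleftrightarrow> _")
proof -
  have w: "?w a \<in> ?S - {0}" if "a \<in> {1..<m}" for a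
    using that kunz_semigroup_apery_mem by auto
  have "\<not> kunz_decomposable m f r \<longleftrightarrow> (\<forall>x\<in>?S - {0}. \<forall>y\<in>?S - {0}. ?w r \<noteq> x + y)"
  proof
    assume nd: "\<not> kunz_decomposable m f r"
    show "\<forall>x\<in>?S - {0}. \<forall>y\<in>?S - {0}. ?w r \<noteq> x + y"
    proof (intro ballI notI)
      fix x y assume xy: "x \<in> ?S - {0}" "y \<in> ?S - {0}" and sum: "?w r = x + y"
      have "?w r = y + x" using sum by simp
      then obtain a b where "a \<in> {1..<m}" "x = ?w a" "b \<in> {1..<m}" "y = ?w b"
        using kunz_semigroup_apery_summand[OF kunz r] sum xy by blast
      with sum nd show False unfolding kunz_decomposable_def by blast
    qed
  next
    assume irreducible: "\<forall>x\<in>?S - {0}. \<forall>y\<in>?S - {0}. ?w r \<noteq> x + y"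
    show "\<not> kunz_decomposable m f r"
      unfolding kunz_decomposable_def using irreducible w by blast
  qed
  then show ?thesis unfolding mem_minimal_generators_iff using w[OF r] by blast
qed

lemma minimal_generators_kunz_semigroup:
  assumes kunz: "kunz_admissible m f"
  shows "minimal_generators (kunz_semigroup m f) =
    insert m ((\<lambda>r. f r * m + r) ` {r \<in> {1..<m}. \<not> kunz_decomposable m f r})"
    (is "minimal_generators ?S = insert m (?w ` ?N)")
proof
  show "minimal_generators ?S \<subseteq> insert m (?w ` ?N)"
  proof
    fix n assume n: "n \<in> minimal_generators ?S"
    then have nS: "n \<in> ?S" "n \<noteq> 0"
      and irreducible: "\<And>x y. x \<in> ?S - {0} \<Longrightarrow> y \<in> ?S - {0} \<Longrightarrow> n \<noteq> x + y"
      by (simp_all add: mem_minimal_generators_iff)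
    show "n \<in> insert m (?w ` ?N)"
    proof (cases rule: kunz_semigroup_apery_cases[OF kunz_admissible_pos[OF kunz] nS(1)])
      case 2
      have "n - m = 0"
      proof (rule ccontr)
        assume "n - m \<noteq> 0"
        then have "n \<noteq> m + (n - m)"
          using irreducible[of m "n - m"] 2 kunz_semigroup_mult[of 1 m f] kunz_admissible_pos[OF kunz]
          by simp
        then show False using 2 by simp
      qed
      then show ?thesis using 2 by simp
    next
      case (3 r)
      then show ?thesis using apery_mem_minimal_generators_iff[OF kunz 3(1)] n by blast
    qed (use nS in simp)
  qed
  show "insert m (?w ` ?N) \<subseteq> minimal_generators ?S"
    using multiplicity_mem_minimal_generators[OF kunz] apery_mem_minimal_generators_iff[OF kunz]
    by blast
qed

lemma embedding_dim_kunz_semigroup: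
  assumes "kunz_admissible m f"
  shows "embedding_dim (kunz_semigroup m f) = 1 + card {r \<in> {1..<m}. \<not> kunz_decomposable m f r}"
proof -
  let ?N = "{r \<in> {1..<m}. \<not> kunz_decomposable m f r}"
  have "inj_on (\<lambda>r. f r * m + r) ?N"
  proof (rule inj_onI)
    fix r r' assume "r \<in> ?N" "r' \<in> ?N" "f r * m + r = f r' * m + r'"
    then show "r = r'" using mult_add_less_inject[of r m r' "f r" "f r'"] by simp
  qed
  then have "card ((\<lambda>r. f r * m + r) ` ?N) = card ?N" by (rule card_image)
  moreover have "m \<noteq> f r * m + r" if "r \<in> ?N" for r
    using that mult_add_less_inject[of 0 m r 1 "f r"] by auto
  then have "m \<notin> (\<lambda>r. f r * m + r) ` ?N" by blast
  moreover have "finite ?N" by simp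
  ultimately show ?thesis
    unfolding embedding_dim_def minimal_generators_kunz_semigroup[OF assms] by simp
qed

lemma embedding_dim_add_card_kunz_decomposable:
  assumes "kunz_admissible m f"
  shows "embedding_dim (kunz_semigroup m f) + card {r \<in> {1..<m}. kunz_decomposable m f r} = m"
proof -
  have "card {r \<in> {1..<m}. \<not> kunz_decomposable m f r} + card {r \<in> {1..<m}. kunz_decomposable m f r} =
      card ({r \<in> {1..<m}. \<not> kunz_decomposable m f r} \<union> {r \<in> {1..<m}. kunz_decomposable m f r})"
    by (rule card_Un_disjoint[symmetric]) auto
  also have "{r \<in> {1..<m}. \<not> kunz_decomposable m f r} \<union> {r \<in> {1..<m}. kunz_decomposable m f r} = {1..<m}"
    by auto
  finally show ?thesis
    using embedding_dim_kunz_semigroup[OF assms] kunz_admissible_pos[OF assms] by simp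
qed

lemma not_kunz_decomposable_coord_1:
  assumes kunz: "kunz_admissible m f" and r: "r < m" and f1: "f r = 1"
  shows "\<not> kunz_decomposable m f r"
proof
  assume "kunz_decomposable m f r"
  then obtain a b where ab: "a \<in> {1..<m}" "b \<in> {1..<m}"
    and "(a + b = r \<and> f r = f a + f b) \<or> (a + b = r + m \<and> f r = f a + f b + 1)"
    unfolding kunz_decomposable_iff[OF r] by blast
  moreover have "1 \<le> f a" "1 \<le> f b" using kunz_admissible_ge_1[OF kunz] ab by auto
  ultimately show False using f1 by auto
qed

lemma kunz_decomposable_coord_2_iff:
  assumes kunz: "kunz_admissible m f" and r: "r < m" and f2: "f r = 2"
  shows "kunz_decomposable m f r \<longleftrightarrow>
    (\<exists>j1 j2. 1 \<le> j1 \<and> 1 \<le> j2 \<and> j1 + j2 = r \<and> f j1 = 1 \<and> f j2 = 1)"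
proof
  assume "kunz_decomposable m f r"
  then obtain a b where ab: "a \<in> {1..<m}" "b \<in> {1..<m}"
    and "(a + b = r \<and> f r = f a + f b) \<or> (a + b = r + m \<and> f r = f a + f b + 1)"
    unfolding kunz_decomposable_iff[OF r] by blast
  moreover have "1 \<le> f a" "1 \<le> f b" using kunz_admissible_ge_1[OF kunz] ab by auto
  ultimately show "\<exists>j1 j2. 1 \<le> j1 \<and> 1 \<le> j2 \<and> j1 + j2 = r \<and> f j1 = 1 \<and> f j2 = 1"
    using f2 by auto
next
  assume "\<exists>j1 j2. 1 \<le> j1 \<and> 1 \<le> j2 \<and> j1 + j2 = r \<and> f j1 = 1 \<and> f j2 = 1"
  then obtain j1 j2 where "1 \<le> j1" "1 \<le> j2" "j1 + j2 = r" "f j1 = 1" "f j2 = 1" by blast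
  then show "kunz_decomposable m f r"
    unfolding kunz_decomposable_iff[OF r] using r f2
    by (intro bexI[of _ j1] bexI[of _ j2]) auto
qed

section \<open>Kunz coordinates of small excess\<close>

definition kunz_excess :: "nat \<Rightarrow> (nat \<Rightarrow> nat) \<Rightarrow> nat" where
  "kunz_excess m f = (\<Sum>r\<in>{1..<m}. f r - 1)"

lemma genus_kunz_semigroup_excess:
  assumes "kunz_admissible m f"
  shows "genus (kunz_semigroup m f) = (m - 1) + kunz_excess m f"
proof -
  have "(\<Sum>r\<in>{1..<m}. f r) = (\<Sum>r\<in>{1..<m}. 1 + (f r - 1))"
  proof (rule sum.cong)
    fix r assume "r \<in> {1..<m}"
    then show "f r = 1 + (f r - 1)" using kunz_admissible_ge_1[OF assms] by fastforce
  qed simp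
  also have "\<dots> = card {1..<m} + kunz_excess m f"
    unfolding kunz_excess_def sum.distrib by simp
  finally show ?thesis
    unfolding genus_kunz_semigroup[OF kunz_admissible_pos[OF assms]] by simp
qed

lemma card_heavy_le_kunz_excess:
  assumes "r \<in> {1..<m}"
  shows "card ({j \<in> {1..<m}. 2 \<le> f j} - {r}) + (f r - 1) \<le> kunz_excess m f"
proof -
  let ?H = "{j \<in> {1..<m}. 2 \<le> f j} - {r}"
  have "card ?H = (\<Sum>j\<in>?H. 1)" by simp
  also have "\<dots> \<le> (\<Sum>j\<in>?H. f j - 1)" by (rule sum_mono) auto
  also have "\<dots> \<le> (\<Sum>j\<in>{1..<m} - {r}. f j - 1)" by (rule sum_mono2) auto
  finally show ?thesis
    unfolding kunz_excess_def using sum.remove[OF _ assms, of "\<lambda>j. f j - 1"] by simp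
qed

lemma card_heavy_below_if_no_light_split:
  assumes kunz: "kunz_admissible m f" and r: "r \<in> {1..<m}"
    and no_split: "\<And>j. j \<in> {1..<r} \<Longrightarrow> f j \<noteq> 1 \<or> f (r - j) \<noteq> 1"
  shows "r - 1 \<le> 2 * card ({j \<in> {1..<m}. 2 \<le> f j} \<inter> {1..<r})"
proof -
  have "card {1..<r} \<le> 2 * card ({j \<in> {1..<m}. 2 \<le> f j} \<inter> {1..<r})"
  proof (rule card_le_twice_card_if_involution_meets[where \<sigma> = "\<lambda>j. r - j"])
    fix j assume j: "j \<in> {1..<r}"
    then have "j \<in> {1..<m}" "r - j \<in> {1..<m}" using r by auto
    then show "j \<in> {j \<in> {1..<m}. 2 \<le> f j} \<or> r - j \<in> {j \<in> {1..<m}. 2 \<le> f j}"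
      using no_split[OF j] kunz_admissible_ge_1[OF kunz] by fastforce
  qed auto
  then show ?thesis by simp
qed

lemma card_heavy_above_if_no_light_split_wrap:
  assumes kunz: "kunz_admissible m f" and r: "r \<in> {1..<m}"
    and no_split: "\<And>j. j \<in> {r<..<m} \<Longrightarrow> f j \<noteq> 1 \<or> f (r + m - j) \<noteq> 1"
  shows "m - 1 - r \<le> 2 * card ({j \<in> {1..<m}. 2 \<le> f j} \<inter> {r<..<m})"
proof -
  have "card {r<..<m} \<le> 2 * card ({j \<in> {1..<m}. 2 \<le> f j} \<inter> {r<..<m})"
  proof (rule card_le_twice_card_if_involution_meets[where \<sigma> = "\<lambda>j. r + m - j"])
    fix j assume j: "j \<in> {r<..<m}"
    then have "j \<in> {1..<m}" "r + m - j \<in> {1..<m}" using r by auto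
    then show "j \<in> {j \<in> {1..<m}. 2 \<le> f j} \<or> r + m - j \<in> {j \<in> {1..<m}. 2 \<le> f j}"
      using no_split[OF j] kunz_admissible_ge_1[OF kunz] by fastforce
  qed auto
  then show ?thesis by simp
qed

lemma kunz_excess_ge_if_no_light_split:
  assumes "kunz_admissible m f" and r: "r \<in> {1..<m}"
    and "\<And>j. j \<in> {1..<r} \<Longrightarrow> f j \<noteq> 1 \<or> f (r - j) \<noteq> 1"
  shows "r - 1 + 2 * (f r - 1) \<le> 2 * kunz_excess m f"
proof -
  let ?H = "{j \<in> {1..<m}. 2 \<le> f j}"
  have "card (?H \<inter> {1..<r}) \<le> card (?H - {r})" by (rule card_mono) auto
  then show ?thesis
    using card_heavy_below_if_no_light_split[OF assms] card_heavy_le_kunz_excess[OF r, of f]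
    by linarith
qed

lemma kunz_excess_ge_if_no_light_split_wrap:
  assumes kunz: "kunz_admissible m f" and r: "r \<in> {1..<m}"
    and no_split: "\<And>j. j \<in> {1..<r} \<Longrightarrow> f j \<noteq> 1 \<or> f (r - j) \<noteq> 1"
    and no_split_wrap: "\<And>j. j \<in> {r<..<m} \<Longrightarrow> f j \<noteq> 1 \<or> f (r + m - j) \<noteq> 1"
  shows "m - 2 + 2 * (f r - 1) \<le> 2 * kunz_excess m f"
proof -
  let ?H = "{j \<in> {1..<m}. 2 \<le> f j}"
  have "card (?H \<inter> {1..<r}) + card (?H \<inter> {r<..<m}) = card (?H \<inter> {1..<r} \<union> ?H \<inter> {r<..<m})"
    by (rule card_Un_disjoint[symmetric]) auto
  also have "\<dots> \<le> card (?H - {r})" by (rule card_mono) auto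
  finally show ?thesis
    using card_heavy_below_if_no_light_split[OF kunz r no_split]
      card_heavy_above_if_no_light_split_wrap[OF kunz r no_split_wrap]
      card_heavy_le_kunz_excess[OF r, of f] r
    by simp
qed

lemma kunz_light_split_le:
  assumes kunz: "kunz_admissible m f" and r: "r \<in> {1..<m}"
  shows "j \<in> {1..<r} \<Longrightarrow> f j = 1 \<Longrightarrow> f (r - j) = 1 \<Longrightarrow> f r \<le> 2"
    and "j \<in> {r<..<m} \<Longrightarrow> f j = 1 \<Longrightarrow> f (r + m - j) = 1 \<Longrightarrow> f r \<le> 3"
proof -
  assume "j \<in> {1..<r}" "f j = 1" "f (r - j) = 1"
  moreover from this have "f (j + (r - j)) \<le> f j + f (r - j)"
    using r by (intro kunz_admissible_add[OF kunz]) auto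
  ultimately show "f r \<le> 2" by simp
next
  assume "j \<in> {r<..<m}" "f j = 1" "f (r + m - j) = 1"
  moreover from this have "f (j + (r + m - j) - m) \<le> f j + f (r + m - j) + 1"
    using r by (intro kunz_admissible_add_wrap[OF kunz]) auto
  ultimately show "f r \<le> 3" by simp
qed

lemma kunz_coord_le_3:
  assumes kunz: "kunz_admissible m f" and shallow: "3 * kunz_excess m f \<le> m" and r: "r \<in> {1..<m}"
  shows "f r \<le> 3"
proof (rule ccontr)
  assume "\<not> f r \<le> 3"
  then have "m - 2 + 2 * (f r - 1) \<le> 2 * kunz_excess m f"
    using kunz_excess_ge_if_no_light_split_wrap[OF kunz r] kunz_light_split_le[OF kunz r] by fastforce
  then show False using shallow \<open>\<not> f r \<le> 3\<close> by linarith
qed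

lemma kunz_coord_eq_3:
  assumes kunz: "kunz_admissible m f" and shallow: "3 * kunz_excess m f \<le> m"
    and r: "r \<in> {1..<m}" and f3: "f r = 3"
  shows "r + 3 \<le> 2 * kunz_excess m f" and "kunz_decomposable m f r"
proof -
  have r_less: "r < m" using r by simp
  have no_split: "f j \<noteq> 1 \<or> f (r - j) \<noteq> 1" if "j \<in> {1..<r}" for j
    using kunz_light_split_le(1)[OF kunz r that] f3 by auto
  show "r + 3 \<le> 2 * kunz_excess m f"
    using kunz_excess_ge_if_no_light_split[OF kunz r no_split] f3 r by simp
  show "kunz_decomposable m f r"
  proof (rule ccontr)
    assume nd: "\<not> kunz_decomposable m f r"
    have "f j \<noteq> 1 \<or> f (r + m - j) \<noteq> 1" if j: "j \<in> {r<..<m}" for j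
    proof (rule ccontr)
      assume "\<not> (f j \<noteq> 1 \<or> f (r + m - j) \<noteq> 1)"
      then have "kunz_decomposable m f r"
        unfolding kunz_decomposable_iff[OF r_less] using j r f3
        by (intro conjI bexI[of _ j] bexI[of _ "r + m - j"]) auto
      with nd show False ..
    qed
    then have "m - 2 + 4 \<le> 2 * kunz_excess m f"
      using kunz_excess_ge_if_no_light_split_wrap[OF kunz r no_split] f3 by simp
    then show False using shallow by linarith
  qed
qed

lemma kunz_decomposable_if_coord_2_beyond:
  assumes kunz: "kunz_admissible m f" and r: "r \<in> {1..<m}" and f2: "f r = 2"
    and beyond: "2 * kunz_excess m f \<le> r"
  shows "kunz_decomposable m f r"
proof (rule ccontr)
  assume nd: "\<not> kunz_decomposable m f r"
  have r_less: "r < m" using r by simp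
  have "f j \<noteq> 1 \<or> f (r - j) \<noteq> 1" if j: "j \<in> {1..<r}" for j
  proof (rule ccontr)
    assume "\<not> (f j \<noteq> 1 \<or> f (r - j) \<noteq> 1)"
    then have "kunz_decomposable m f r"
      unfolding kunz_decomposable_iff[OF r_less] using j r f2
      by (intro conjI bexI[of _ j] bexI[of _ "r - j"]) auto
    with nd show False ..
  qed
  then have "r - 1 + 2 \<le> 2 * kunz_excess m f"
    using kunz_excess_ge_if_no_light_split[OF kunz r] f2 by simp
  then show False using beyond r by simp
qed

definition kunz_prefix :: "(nat \<Rightarrow> nat) \<Rightarrow> nat \<Rightarrow> nat list" where
  "kunz_prefix f p = map (\<lambda>i. f (Suc i)) [0..<p]"

lemma length_kunz_prefix [simp]: "length (kunz_prefix f p) = p"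
  by (simp add: kunz_prefix_def)

lemma nth_kunz_prefix [simp]: "i < p \<Longrightarrow> kunz_prefix f p ! i = f (Suc i)"
  by (simp add: kunz_prefix_def)

lemma set_kunz_prefix: "set (kunz_prefix f p) = f ` {1..p}"
proof -
  have "set (kunz_prefix f p) = (\<lambda>i. f (Suc i)) ` {0..<p}" by (simp add: kunz_prefix_def)
  also have "\<dots> = f ` Suc ` {0..<p}" by (simp only: image_image)
  also have "Suc ` {0..<p} = {1..p}"
    by (simp add: image_Suc_atLeastLessThan atLeastLessThanSuc_atLeastAtMost)
  finally show ?thesis .
qed

lemma kunz_prefix_cong:
  assumes "\<And>i. i \<in> {1..p} \<Longrightarrow> f i = f' i"
  shows "kunz_prefix f p = kunz_prefix f' p"
  unfolding kunz_prefix_def using assms by simp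

lemma cnt_a_kunz_prefix: "cnt_a (kunz_prefix f p) = card {i \<in> {1..p}. f i = 2}"
  unfolding cnt_a_def by (intro arg_cong[where f = card] Collect_cong) auto

lemma cnt_b_kunz_prefix: "cnt_b (kunz_prefix f p) = card {i \<in> {1..p}. f i = 3}"
  unfolding cnt_b_def by (intro arg_cong[where f = card] Collect_cong) auto

lemma cnt_c_kunz_prefix: "cnt_c (kunz_prefix f p) =
    card {i \<in> {1..p}. \<exists>j1\<in>{1..p}. \<exists>j2\<in>{1..p}. j1 + j2 = i \<and> f j1 = 1 \<and> f j2 = 1 \<and> f i = 2}"
  unfolding cnt_c_def by (intro arg_cong[where f = card] Collect_cong) (auto; force)

lemma kunz_excess_split:
  assumes "p < m" "\<And>i. i \<in> {1..p} \<Longrightarrow> f i \<in> {1, 2, 3}" "\<And>i. i \<in> {p<..<m} \<Longrightarrow> f i \<in> {1, 2}"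
  shows "kunz_excess m f =
    cnt_a (kunz_prefix f p) + 2 * cnt_b (kunz_prefix f p) + card {r \<in> {p<..<m}. f r = 2}"
proof -
  have "{1..<m} = {1..p} \<union> {p<..<m}" using assms(1) by auto
  then have "kunz_excess m f = (\<Sum>r\<in>{1..p}. f r - 1) + (\<Sum>r\<in>{p<..<m}. f r - 1)"
    unfolding kunz_excess_def by (simp add: sum.union_disjoint ivl_disj_int)
  also have "(\<Sum>r\<in>{1..p}. f r - 1) = cnt_a (kunz_prefix f p) + 2 * cnt_b (kunz_prefix f p)"
    unfolding cnt_a_kunz_prefix cnt_b_kunz_prefix by (rule sum_minus_1_eq_card_2_3[OF _ assms(2)]) simp
  also have "(\<Sum>r\<in>{p<..<m}. f r - 1) = card {r \<in> {p<..<m}. f r = 2}"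
    using sum_minus_1_eq_card_2_3[of "{p<..<m}" f] assms(3) by force
  finally show ?thesis .
qed

lemma kunz_coord_shallow:
  assumes kunz: "kunz_admissible m f" and shallow: "3 * kunz_excess m f \<le> m"
    and p: "p = 2 * kunz_excess m f - 1"
  shows "p < m" and "\<And>i. i \<in> {1..<m} \<Longrightarrow> f i \<in> {1, 2, 3}"
    and "\<And>i. i \<in> {p<..<m} \<Longrightarrow> f i \<in> {1, 2}"
proof -
  show "p < m" using p shallow kunz_admissible_pos[OF kunz] by linarith
  show range: "f i \<in> {1, 2, 3}" if "i \<in> {1..<m}" for i
    using kunz_admissible_ge_1[OF kunz that] kunz_coord_le_3[OF kunz shallow that] by auto
  show "f i \<in> {1, 2}" if i: "i \<in> {p<..<m}" for i
  proof -
    have "i \<in> {1..<m}" using i by auto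
    moreover have "f i \<noteq> 3"
      using kunz_coord_eq_3(1)[OF kunz shallow \<open>i \<in> {1..<m}\<close>] i p by fastforce
    ultimately show ?thesis using range by blast
  qed
qed

lemma kunz_decomposable_shallow_iff:
  assumes kunz: "kunz_admissible m f" and shallow: "3 * kunz_excess m f \<le> m"
    and p: "p = 2 * kunz_excess m f - 1" and r: "r \<in> {1..<m}"
  shows "kunz_decomposable m f r \<longleftrightarrow> (r \<le> p \<and> f r = 3) \<or>
    (r \<le> p \<and> (\<exists>j1\<in>{1..p}. \<exists>j2\<in>{1..p}. j1 + j2 = r \<and> f j1 = 1 \<and> f j2 = 1 \<and> f r = 2)) \<or>
    (p < r \<and> f r = 2)"
proof -
  consider "f r = 1" | "f r = 2" | "f r = 3" using kunz_coord_shallow(2)[OF kunz shallow p r] by blast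
  then show ?thesis
  proof cases
    case 1
    then show ?thesis using not_kunz_decomposable_coord_1[OF kunz _ 1] r by simp
  next
    case 2
    show ?thesis
    proof (cases "r \<le> p")
      case True
      then show ?thesis using kunz_decomposable_coord_2_iff[OF kunz _ 2] 2 r by fastforce
    next
      case False
      then show ?thesis using kunz_decomposable_if_coord_2_beyond[OF kunz r 2] 2 p by simp
    qed
  next
    case 3
    then show ?thesis using kunz_coord_eq_3[OF kunz shallow r 3] p by simp
  qed
qed

lemma card_kunz_decomposable:
  assumes "kunz_admissible m f" and "3 * kunz_excess m f \<le> m"
    and "p = 2 * kunz_excess m f - 1"
  shows "card {r \<in> {1..<m}. kunz_decomposable m f r} =
    cnt_b (kunz_prefix f p) + cnt_c (kunz_prefix f p) + card {r \<in> {p<..<m}. f r = 2}"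
proof -
  let ?B = "{i \<in> {1..p}. f i = 3}"
  let ?C = "{i \<in> {1..p}. \<exists>j1\<in>{1..p}. \<exists>j2\<in>{1..p}. j1 + j2 = i \<and> f j1 = 1 \<and> f j2 = 1 \<and> f i = 2}"
  let ?R = "{r \<in> {p<..<m}. f r = 2}"
  have "p < m" using kunz_coord_shallow(1)[OF assms] .
  have "{r \<in> {1..<m}. kunz_decomposable m f r} = ?B \<union> ?C \<union> ?R"
  proof (rule set_eqI)
    fix r
    show "r \<in> {r \<in> {1..<m}. kunz_decomposable m f r} \<longleftrightarrow> r \<in> ?B \<union> ?C \<union> ?R"
    proof (cases "r \<in> {1..<m}")
      case True
      then show ?thesis using kunz_decomposable_shallow_iff[OF assms True] by auto
    qed (use \<open>p < m\<close> in auto)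
  qed
  moreover have "card (?B \<union> ?C \<union> ?R) = card ?B + card ?C + card ?R"
    by (subst card_Un_disjoint; auto)+
  ultimately show ?thesis unfolding cnt_b_kunz_prefix cnt_c_kunz_prefix by simp
qed

definition avoids_113 :: "nat list \<Rightarrow> bool" where
  "avoids_113 xs \<longleftrightarrow> (\<forall>i1\<in>{1..length xs}. \<forall>i2\<in>{1..length xs}. \<forall>i3\<in>{1..length xs}.
     i1 + i2 = i3 \<longrightarrow> (xs ! (i1 - 1), xs ! (i2 - 1), xs ! (i3 - 1)) \<noteq> (1, 1, 3))"

lemma cnt_Nil: "cnt_a [] = 0" "cnt_b [] = 0"
  by (simp_all add: cnt_a_def cnt_b_def)

lemma mem_Y_iff:
  assumes "-1 \<le> k"
  shows "xs \<in> Y k \<longleftrightarrow> length xs = nat (2 * k + 1) \<and> set xs \<subseteq> {1, 2, 3} \<and> avoids_113 xs \<and>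
    int (cnt_a xs) + 2 * int (cnt_b xs) \<le> k + 1"
proof (cases "k = -1")
  case True
  then show ?thesis by (auto simp: Y_def avoids_113_def cnt_Nil)
next
  case False
  then show ?thesis using assms by (auto simp: Y_def avoids_113_def)
qed

lemma avoids_113_kunz_prefix:
  assumes kunz: "kunz_admissible m f" and "p < m"
  shows "avoids_113 (kunz_prefix f p)"
  unfolding avoids_113_def
proof (intro ballI impI)
  fix i1 i2 i3 assume i: "i1 \<in> {1..length (kunz_prefix f p)}" "i2 \<in> {1..length (kunz_prefix f p)}"
    "i3 \<in> {1..length (kunz_prefix f p)}" "i1 + i2 = i3"
  then have "f i3 \<le> f i1 + f i2" using kunz_admissible_add[OF kunz, of i1 i2] \<open>p < m\<close> by auto
  then show "(kunz_prefix f p ! (i1 - 1), kunz_prefix f p ! (i2 - 1), kunz_prefix f p ! (i3 - 1)) \<noteq> (1, 1, 3)"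
    using i by auto
qed

lemma kunz_prefix_mem_Y:
  assumes kunz: "kunz_admissible m f" and "3 * kunz_excess m f \<le> m"
    and p: "p = 2 * kunz_excess m f - 1"
  shows "kunz_prefix f p \<in> Y (int (kunz_excess m f) - 1)"
proof -
  note shallow_facts = kunz_coord_shallow[OF assms]
  have "f i \<in> {1, 2, 3}" if "i \<in> {1..p}" for i
    using that shallow_facts(1) by (intro shallow_facts(2)) auto
  then have "set (kunz_prefix f p) \<subseteq> {1, 2, 3}" unfolding set_kunz_prefix by blast
  moreover have "kunz_excess m f = cnt_a (kunz_prefix f p) + 2 * cnt_b (kunz_prefix f p) +
      card {r \<in> {p<..<m}. f r = 2}"
    using kunz_excess_split[OF shallow_facts(1)] shallow_facts(1,2,3) by simp
  moreover have "length (kunz_prefix f p) = nat (2 * (int (kunz_excess m f) - 1) + 1)"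
    using p by simp
  moreover have "-1 \<le> int (kunz_excess m f) - 1" by simp
  ultimately show ?thesis
    using mem_Y_iff avoids_113_kunz_prefix[OF kunz shallow_facts(1)] by simp
qed

section \<open>The parametrisation\<close>

definition kunz_extend :: "nat list \<Rightarrow> nat set \<Rightarrow> nat \<Rightarrow> nat" where
  "kunz_extend xs R i = (if 1 \<le> i \<and> i \<le> length xs then xs ! (i - 1) else if i \<in> R then 2 else 1)"

lemma kunz_prefix_kunz_extend: "kunz_prefix (kunz_extend xs R) (length xs) = xs"
  by (rule nth_equalityI) (simp_all add: kunz_extend_def)

lemma kunz_extend_tail:
  assumes "R \<subseteq> {length xs<..<m}"
  shows "{r \<in> {length xs<..<m}. kunz_extend xs R r = 2} = R"
  using assms by (auto simp: kunz_extend_def)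

lemma kunz_extend_range:
  assumes "set xs \<subseteq> {1, 2, 3}"
  shows "kunz_extend xs R i \<in> {1, 2, 3}" and "length xs < i \<Longrightarrow> kunz_extend xs R i \<in> {1, 2}"
proof -
  have "xs ! (i - 1) \<in> {1, 2, 3}" if "1 \<le> i" "i \<le> length xs"
  proof -
    have "xs ! (i - 1) \<in> set xs" using that by simp
    then show ?thesis using assms by blast
  qed
  then show "kunz_extend xs R i \<in> {1, 2, 3}" by (auto simp: kunz_extend_def)
  show "length xs < i \<Longrightarrow> kunz_extend xs R i \<in> {1, 2}" by (simp add: kunz_extend_def)
qed

lemma kunz_admissible_kunz_extend:
  assumes len: "length xs < m" and set: "set xs \<subseteq> {1, 2, 3}" and avoids: "avoids_113 xs"
  shows "kunz_admissible m (kunz_extend xs R)"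
  unfolding kunz_admissible_def
proof (intro conjI ballI allI impI)
  let ?f = "kunz_extend xs R"
  note range = kunz_extend_range[OF set, where R = R]
  show "0 < m" using len by simp
  show "1 \<le> ?f r" for r using range(1)[of r] by auto
  fix r s
  show "?f (r + s - m) \<le> ?f r + ?f s + 1" using range(1)[of "r + s - m"] range(1)[of r] range(1)[of s]
    by auto
  assume rs: "1 \<le> r" "1 \<le> s" "r + s < m"
  show "?f (r + s) \<le> ?f r + ?f s"
  proof (cases "r + s \<le> length xs")
    case True
    then have "(xs ! (r - 1), xs ! (s - 1), xs ! (r + s - 1)) \<noteq> (1, 1, 3)"
      using avoids rs unfolding avoids_113_def by auto
    then show ?thesis
      using True rs range(1)[of r] range(1)[of s] range(1)[of "r + s"] by (auto simp: kunz_extend_def)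
  next
    case False
    then show ?thesis using range(2)[of "r + s"] range(1)[of r] range(1)[of s] by auto
  qed
qed

lemma kunz_semigroup_kunz_extend_kunz_prefix:
  assumes kunz: "kunz_admissible m f" and "3 * kunz_excess m f \<le> m"
    and "p = 2 * kunz_excess m f - 1"
  shows "kunz_semigroup m (kunz_extend (kunz_prefix f p) {r \<in> {p<..<m}. f r = 2}) = kunz_semigroup m f"
proof (rule kunz_semigroup_cong[OF kunz_admissible_pos[OF kunz]])
  fix r assume r: "r \<in> {1..<m}"
  show "kunz_extend (kunz_prefix f p) {r \<in> {p<..<m}. f r = 2} r = f r"
  proof (cases "r \<le> p")
    case True
    then show ?thesis using r by (auto simp: kunz_extend_def)
  next
    case False
    then have "f r \<in> {1, 2}" using kunz_coord_shallow(3)[OF assms, of r] r by simp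
    then show ?thesis using False r by (auto simp: kunz_extend_def)
  qed
qed

definition Y_level :: "int \<Rightarrow> int \<Rightarrow> nat list set" where
  "Y_level l k = {xs \<in> Y k. int (cnt_a xs) + int (cnt_b xs) - int (cnt_c xs) = 2 * k + 1 - l}"

definition tail_sets :: "nat \<Rightarrow> int \<Rightarrow> nat list \<Rightarrow> nat set set" where
  "tail_sets g k xs = {R. R \<subseteq> {nat (2 * k + 2)..<nat (int g - k)} \<and>
     card R = nat (k + 1 - int (cnt_a xs) - 2 * int (cnt_b xs))}"

definition kunz_params :: "nat \<Rightarrow> int \<Rightarrow> (int \<times> nat list \<times> nat set) set" where
  "kunz_params g l = (SIGMA k:{-1..l}. SIGMA xs:Y_level l k. tail_sets g k xs)"

definition param_semigroup :: "nat \<Rightarrow> int \<times> nat list \<times> nat set \<Rightarrow> nat set" where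
  "param_semigroup g = (\<lambda>(k, xs, R). kunz_semigroup (nat (int g - k)) (kunz_extend xs R))"

lemma kunz_paramsD:
  assumes gl: "4 * l + 3 \<le> int g" and t: "(k, xs, R) \<in> kunz_params g l"
  defines "m \<equiv> nat (int g - k)" and "f \<equiv> kunz_extend xs R"
  shows "kunz_admissible m f" and "int (kunz_excess m f) = k + 1" and "3 * kunz_excess m f \<le> m"
    and "length xs = 2 * kunz_excess m f - 1" and "{r \<in> {length xs<..<m}. f r = 2} = R"
    and "int (cnt_a xs) + int (cnt_b xs) - int (cnt_c xs) = 2 * k + 1 - l"
    and "int (card R) = k + 1 - int (cnt_a xs) - 2 * int (cnt_b xs)"
proof -
  have k: "-1 \<le> k" "k \<le> l" and "xs \<in> Y k"
    and level: "int (cnt_a xs) + int (cnt_b xs) - int (cnt_c xs) = 2 * k + 1 - l"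
    and R: "R \<subseteq> {nat (2 * k + 2)..<m}"
    and card_R: "card R = nat (k + 1 - int (cnt_a xs) - 2 * int (cnt_b xs))"
    using t unfolding kunz_params_def Y_level_def tail_sets_def m_def by auto
  then have len: "length xs = nat (2 * k + 1)" and set: "set xs \<subseteq> {1, 2, 3}"
    and avoids: "avoids_113 xs" and ab: "int (cnt_a xs) + 2 * int (cnt_b xs) \<le> k + 1"
    using mem_Y_iff by blast+
  have "length xs < m" using len gl k unfolding m_def by linarith
  then show "kunz_admissible m f"
    unfolding f_def using kunz_admissible_kunz_extend set avoids by blast
  have "R \<subseteq> {length xs<..<m}"
  proof (cases "k = -1")
    case True
    \<comment> \<open>for k = -1 the interval starts at 0, but the cardinality condition forces R = {}\<close>
    then have "R = {}" using card_R ab R finite_subset[OF R] by simp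
    then show ?thesis by simp
  next
    case False
    then have "nat (2 * k + 2) = Suc (length xs)" using len k by linarith
    then show ?thesis using R by auto
  qed
  then show tail: "{r \<in> {length xs<..<m}. f r = 2} = R"
    unfolding f_def by (rule kunz_extend_tail)
  have "kunz_excess m f = cnt_a xs + 2 * cnt_b xs + card R"
    using kunz_excess_split[OF \<open>length xs < m\<close>, of f] kunz_extend_range[OF set]
    unfolding f_def kunz_prefix_kunz_extend tail[unfolded f_def] by auto
  then show excess: "int (kunz_excess m f) = k + 1" using card_R ab by simp
  show "3 * kunz_excess m f \<le> m" using excess gl k unfolding m_def by linarith
  show "length xs = 2 * kunz_excess m f - 1" using excess len k by linarith
  show "int (cnt_a xs) + int (cnt_b xs) - int (cnt_c xs) = 2 * k + 1 - l" by (rule level)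
  show "int (card R) = k + 1 - int (cnt_a xs) - 2 * int (cnt_b xs)" using card_R ab by simp
qed

lemma param_semigroup_mem:
  assumes gl: "4 * l + 3 \<le> int g" and t: "t \<in> kunz_params g l"
  shows "param_semigroup g t \<in> {S \<in> semigroups_of_genus g. int (embedding_dim S) = int g - l}"
proof -
  obtain k xs R where t_eq: "t = (k, xs, R)" by (cases t)
  define m where "m = nat (int g - k)"
  define f where "f = kunz_extend xs R"
  note params = kunz_paramsD[OF gl t[unfolded t_eq], folded m_def f_def]
  have k: "-1 \<le> k" "k \<le> l" using t unfolding t_eq kunz_params_def by auto
  have m: "int m = int g - k" using k gl unfolding m_def by simp
  have "genus (kunz_semigroup m f) = g"
    using genus_kunz_semigroup_excess[OF params(1)] params(2) m kunz_admissible_pos[OF params(1)]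
    by linarith
  moreover have "card {r \<in> {1..<m}. kunz_decomposable m f r} = cnt_b xs + cnt_c xs + card R"
    using card_kunz_decomposable[OF params(1,3,4)] params(5)
    unfolding f_def kunz_prefix_kunz_extend by simp
  then have "int (embedding_dim (kunz_semigroup m f)) = int g - l"
    using embedding_dim_add_card_kunz_decomposable[OF params(1)] m params(6,7) by linarith
  ultimately show ?thesis
    using numerical_semigroup_kunz_semigroup[OF params(1)]
    unfolding t_eq param_semigroup_def semigroups_of_genus_def m_def f_def by simp
qed

lemma inj_on_param_semigroup:
  assumes gl: "4 * l + 3 \<le> int g"
  shows "inj_on (param_semigroup g) (kunz_params g l)"
proof (rule inj_onI)
  fix t t' assume t: "t \<in> kunz_params g l" and t': "t' \<in> kunz_params g l"
    and eq: "param_semigroup g t = param_semigroup g t'"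
  obtain k xs R where t_eq: "t = (k, xs, R)" by (cases t)
  obtain k' xs' R' where t'_eq: "t' = (k', xs', R')" by (cases t')
  define m where "m = nat (int g - k)"
  define f where "f = kunz_extend xs R"
  define m' where "m' = nat (int g - k')"
  define f' where "f' = kunz_extend xs' R'"
  note params = kunz_paramsD[OF gl t[unfolded t_eq], folded m_def f_def]
  note params' = kunz_paramsD[OF gl t'[unfolded t'_eq], folded m'_def f'_def]
  have same: "kunz_semigroup m f = kunz_semigroup m' f'"
    using eq unfolding t_eq t'_eq param_semigroup_def m_def f_def m'_def f'_def by simp
  have mm: "m = m'" and ff: "\<And>r. r \<in> {1..<m} \<Longrightarrow> f r = f' r"
    using kunz_semigroup_inject[OF params(1) params'(1) same] by blast+
  have "-1 \<le> k" "k \<le> l" "-1 \<le> k'" "k' \<le> l"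
    using t t' unfolding t_eq t'_eq kunz_params_def by auto
  then have kk: "k = k'" using mm gl unfolding m_def m'_def by simp
  have len: "length xs' = length xs"
    using params(2,4) params'(2,4) kk by linarith
  have "length xs < m" using params(3,4) kunz_admissible_pos[OF params(1)] by linarith
  have "xs = kunz_prefix f (length xs)" unfolding f_def by (rule kunz_prefix_kunz_extend[symmetric])
  also have "\<dots> = kunz_prefix f' (length xs)"
    using ff \<open>length xs < m\<close> by (intro kunz_prefix_cong) auto
  also have "\<dots> = xs'" unfolding f'_def len[symmetric] by (rule kunz_prefix_kunz_extend)
  finally have xx: "xs = xs'" .
  have "R = {r \<in> {length xs<..<m}. f r = 2}" using params(5) by simp
  also have "\<dots> = {r \<in> {length xs'<..<m'}. f' r = 2}" using ff mm len by auto
  also have "\<dots> = R'" using params'(5) .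
  finally show "t = t'" using t_eq t'_eq kk xx by simp
qed

lemma kunz_coords_mem_kunz_params:
  assumes kunz: "kunz_admissible m f" and shallow: "3 * kunz_excess m f \<le> m"
    and p: "p = 2 * kunz_excess m f - 1"
    and g: "int g = int m - 1 + int (kunz_excess m f)"
    and l: "l = int (kunz_excess m f) - 1 + int (card {r \<in> {1..<m}. kunz_decomposable m f r})"
  shows "(int (kunz_excess m f) - 1, kunz_prefix f p, {r \<in> {p<..<m}. f r = 2}) \<in> kunz_params g l"
proof -
  define k where "k = int (kunz_excess m f) - 1"
  define xs where "xs = kunz_prefix f p"
  define R where "R = {r \<in> {p<..<m}. f r = 2}"
  have "p < m" using kunz_coord_shallow(1)[OF kunz shallow p] .
  have excess: "kunz_excess m f = cnt_a xs + 2 * cnt_b xs + card R"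
    using kunz_excess_split[OF \<open>p < m\<close>] kunz_coord_shallow(2,3)[OF kunz shallow p] \<open>p < m\<close>
    unfolding xs_def R_def by simp
  have "xs \<in> Y_level l k"
    using kunz_prefix_mem_Y[OF kunz shallow p] l card_kunz_decomposable[OF kunz shallow p] excess
    unfolding Y_level_def xs_def R_def k_def by simp
  moreover have "R \<in> tail_sets g k xs"
  proof -
    have "nat (2 * k + 2) \<le> Suc p" "nat (int g - k) = m" using g p unfolding k_def by auto
    then have "R \<subseteq> {nat (2 * k + 2)..<nat (int g - k)}" unfolding R_def by auto
    then show ?thesis using excess unfolding tail_sets_def k_def by simp
  qed
  moreover have "k \<in> {-1..l}" using l unfolding k_def by simp
  ultimately have "(k, xs, R) \<in> kunz_params g l" unfolding kunz_params_def by simp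
  then show ?thesis unfolding k_def xs_def R_def .
qed

lemma param_semigroup_surj:
  assumes gl: "4 * l + 3 \<le> int g"
    and S: "S \<in> {S \<in> semigroups_of_genus g. int (embedding_dim S) = int g - l}"
  shows "S \<in> param_semigroup g ` kunz_params g l"
proof -
  have ns: "numerical_semigroup S" and genus: "genus S = g"
    and edim: "int (embedding_dim S) = int g - l"
    using S unfolding semigroups_of_genus_def by auto
  from ns obtain m f where kunz: "kunz_admissible m f" and S_eq: "S = kunz_semigroup m f"
    by (rule numerical_semigroup_kunz_representation)
  define h where "h = kunz_excess m f"
  \<comment> \<open>for h = 0 the truncated subtraction gives p = 0, the length of the empty tuple of Y(-1)\<close>
  define p where "p = 2 * h - 1"
  have g: "int g = int m - 1 + int h"
    using genus_kunz_semigroup_excess[OF kunz] genus kunz_admissible_pos[OF kunz]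
    unfolding S_eq h_def by linarith
  have l: "l = int h - 1 + int (card {r \<in> {1..<m}. kunz_decomposable m f r})"
    using embedding_dim_add_card_kunz_decomposable[OF kunz] edim g unfolding S_eq by linarith
  have shallow: "3 * kunz_excess m f \<le> m" using gl g l unfolding h_def by linarith
  note p_def' = p_def[unfolded h_def]
  have "param_semigroup g (int h - 1, kunz_prefix f p, {r \<in> {p<..<m}. f r = 2}) = S"
    using kunz_semigroup_kunz_extend_kunz_prefix[OF kunz shallow p_def'] g
    unfolding param_semigroup_def S_eq by simp
  moreover have "(int h - 1, kunz_prefix f p, {r \<in> {p<..<m}. f r = 2}) \<in> kunz_params g l"
    using kunz_coords_mem_kunz_params[OF kunz shallow p_def' g[unfolded h_def] l[unfolded h_def]]
    unfolding h_def .
  ultimately show ?thesis by (rule image_eqI[OF sym])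
qed

lemma bij_betw_param_semigroup:
  assumes "4 * l + 3 \<le> int g"
  shows "bij_betw (param_semigroup g) (kunz_params g l)
    {S \<in> semigroups_of_genus g. int (embedding_dim S) = int g - l}"
  unfolding bij_betw_def
  using inj_on_param_semigroup[OF assms] param_semigroup_mem[OF assms] param_semigroup_surj[OF assms]
  by blast

lemma card_tail_sets:
  assumes "4 * l + 3 \<le> int g" "k \<in> {-1..l}"
  shows "card (tail_sets g k xs) =
    nat (int g - 3 * k - 2) choose nat (k + 1 - int (cnt_a xs) - 2 * int (cnt_b xs))"
proof -
  have "card {nat (2 * k + 2)..<nat (int g - k)} = nat (int g - 3 * k - 2)" using assms by auto
  then show ?thesis unfolding tail_sets_def using n_subsets[of "{nat (2 * k + 2)..<nat (int g - k)}"]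
    by simp
qed

lemma finite_tail_sets: "finite (tail_sets g k xs)"
  unfolding tail_sets_def by (rule finite_subset[of _ "Pow {nat (2 * k + 2)..<nat (int g - k)}"]) auto

lemma finite_Y_level: "finite (Y_level l k)"
proof -
  have "Y_level l k \<subseteq> {xs. set xs \<subseteq> {1, 2, 3} \<and> length xs = nat (2 * k + 1)}"
    unfolding Y_level_def Y_def by auto
  moreover have "finite {xs. set xs \<subseteq> {1 :: nat, 2, 3} \<and> length xs = nat (2 * k + 1)}"
    by (rule finite_lists_length_eq) simp
  ultimately show ?thesis by (rule finite_subset)
qed

theorem theorem8p10:
  fixes l :: int and g :: nat
  assumes "l \<ge> -1" and "int g \<ge> 4 * l + 3"
  shows "int (card {S \<in> semigroups_of_genus g. int (embedding_dim S) = int g - l}) =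
    (\<Sum>k\<in>{-1..l}. \<Sum>xs\<in>{xs \<in> Y k. int (cnt_a xs) + int (cnt_b xs) - int (cnt_c xs) = 2 * k + 1 - l}.
        int ((nat (int g - 3 * k - 2)) choose (nat (k + 1 - int (cnt_a xs) - 2 * int (cnt_b xs)))))"
proof -
  have "card {S \<in> semigroups_of_genus g. int (embedding_dim S) = int g - l} = card (kunz_params g l)"
    using bij_betw_same_card[OF bij_betw_param_semigroup[OF assms(2)]] by simp
  also have "\<dots> = (\<Sum>k\<in>{-1..l}. \<Sum>xs\<in>Y_level l k. card (tail_sets g k xs))"
    unfolding kunz_params_def
    by (simp add: card_SigmaI finite_SigmaI finite_Y_level finite_tail_sets)
  also have "\<dots> = (\<Sum>k\<in>{-1..l}. \<Sum>xs\<in>Y_level l k.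
      nat (int g - 3 * k - 2) choose nat (k + 1 - int (cnt_a xs) - 2 * int (cnt_b xs)))"
    using card_tail_sets[OF assms(2)] by simp
  finally show ?thesis unfolding Y_level_def by simp
qed

end
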